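(* Let $n\ge3$ and $c>0$. Then $\gamma$ is a $C^2$ function on $[0,\infty)$, and for all $x\ge0$: (i) $2x\gamma''(x)+\gamma'(x)\le\frac{3}{n+2}$, with equality if and only if $x=x_0$; (ii) $(\gamma(x)+nc)\,x\,\gamma'(x)\ge 2cx+\gamma(x)^2-nc\,\gamma(x)$, with equality if and only if $x\ge x_0$; (iii) $\gamma(x)>x\gamma'(x)$; (iv) $\gamma(x)=\min\{\alpha(x),\beta(x)\}$; (v) $\frac{x}{n-1}+2c<\gamma(x)<\frac{x}{n-1}+nc$; (vi) $\frac{n-2}{\sqrt{n(n-1)}}\sqrt{x\left(\gamma(x)-\frac1n x\right)}+\gamma(x)\le\frac2n x+nc$.
   Context: Definition of $\gamma$: For $n\ge 3$, $c>0$ and $x\ge 0$ put $\alpha(x)=nc+\frac{n}{2(n-1)}x-\frac{n-2}{2(n-1)}\sqrt{x^2+4(n-1)cx}$, $y_n=4(1-n)+\frac{2(n^2-4)}{\sqrt{2n-5}}\cos\!\left(\frac13\arctan\frac{n^2-4n+6}{2(n-1)\sqrt{2n-5}}\right)$, $x_0=y_nc$, $\beta(x)=\alpha(x_0)+\alpha'(x_0)(x-x_0)+\frac12\alpha''(x_0)(x-x_0)^2$, and $\gamma(x)=\alpha(x)$ for $x\ge x_0$, $\gamma(x)=\beta(x)$ for $0\le x<x_0$. *)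

theory Defs
  imports "HOL-Analysis.Analysis"
begin

definition alpha :: "nat \<Rightarrow> real \<Rightarrow> real \<Rightarrow> real" where
  "alpha n c x = real n * c + real n / (2 * (real n - 1)) * x
     - (real n - 2) / (2 * (real n - 1)) * sqrt (x\<^sup>2 + 4 * (real n - 1) * c * x)"

definition y_n :: "nat \<Rightarrow> real" where
  "y_n n = 4 * (1 - real n) + 2 * ((real n)\<^sup>2 - 4) / sqrt (2 * real n - 5)
     * cos (1/3 * arctan (((real n)\<^sup>2 - 4 * real n + 6) / (2 * (real n - 1) * sqrt (2 * real n - 5))))"

definition x0 :: "nat \<Rightarrow> real \<Rightarrow> real" where
  "x0 n c = y_n n * c"

definition beta :: "nat \<Rightarrow> real \<Rightarrow> real \<Rightarrow> real" where
  "beta n c x = alpha n c (x0 n c) + deriv (alpha n c) (x0 n c) * (x - x0 n c)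
     + 1/2 * deriv (deriv (alpha n c)) (x0 n c) * (x - x0 n c)\<^sup>2"

definition gamma :: "nat \<Rightarrow> real \<Rightarrow> real \<Rightarrow> real" where
  "gamma n c x = (if x \<ge> x0 n c then alpha n c x else beta n c x)"

end

theory Submission
  imports Defs
begin

text \<open>
  The function \<open>alpha\<close> satisfies (ii) with equality, and along \<open>alpha\<close>
  \<open>2 x alpha'' + alpha' = n / (2 (n - 1)) - (n - 2) / (2 (n - 1)) h(t)\<close> with
  \<open>h(t) = t (3 - t\<^sup>2) / 2\<close> and \<open>t = x / sqrt (x\<^sup>2 + 4 (n - 1) c x)\<close>. As \<open>t\<close> increases from
  \<open>0\<close> to \<open>1\<close>, this quantity strictly decreases. The trigonometric formula for \<open>y_n\<close> is the
  solution of the cubic \<open>h(t) = (n\<^sup>2 - 4 n + 6) / (n\<^sup>2 - 4)\<close> by the triple angle formula, so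
  \<open>x0\<close> is exactly the point where \<open>2 x alpha'' + alpha' = 3 / (n + 2)\<close>.

  Since \<open>alpha''\<close> is decreasing, \<open>beta\<close> lies above \<open>alpha\<close> left of \<open>x0\<close> and below it to
  the right, which is (iv). The remaining statements for \<open>beta\<close> follow by expanding their defects
  in powers of \<open>x - x0\<close>: the terms of order \<open>0\<close> and \<open>1\<close> vanish because the corresponding
  identities for \<open>alpha\<close> hold identically, and what remains has a sign.
\<close>

section \<open>Real analysis\<close>

lemma cubic_strict_mono:
  fixes p q :: real
  assumes "0 \<le> p" "p < q" "q \<le> 1"
  shows "p * (3 - p\<^sup>2) < q * (3 - q\<^sup>2)"
proof -
  have "q * (3 - q\<^sup>2) - p * (3 - p\<^sup>2) = (q - p) * (3 - q\<^sup>2 - q * p - p\<^sup>2)"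
    by (simp add: algebra_simps power2_eq_square)
  moreover have "q\<^sup>2 \<le> 1" "q * p < 1" "p\<^sup>2 < 1"
    using assms by (auto simp: power_le_one abs_square_less_1 intro: mult_le_one)
      (smt (verit) mult_le_one mult_strict_left_mono)
  ultimately show ?thesis
    using assms by (smt (verit) mult_pos_pos)
qed

lemma convex_comb_less:
  fixes a b M u :: real
  assumes "0 \<le> u" "u \<le> 1" "a < M" "b < M"
  shows "(1 - u) * a + u * b < M"
proof -
  have "(1 - u) * a \<le> (1 - u) * M" "u * b \<le> u * M"
    using assms by (simp_all add: mult_left_mono)
  moreover have "(1 - u) * a < (1 - u) * M \<or> u * b < u * M"
    using assms by (cases "u = 0") auto
  ultimately show ?thesis
    by (auto simp: algebra_simps)
qed

lemma mult_sqrt_le: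
  fixes k T G :: real
  assumes "0 \<le> k" "0 \<le> G" "k\<^sup>2 * T \<le> G\<^sup>2"
  shows "k * sqrt T \<le> G"
proof -
  have "k * sqrt T = sqrt (k\<^sup>2 * T)"
    using assms(1) by (simp add: real_sqrt_mult)
  also have "\<dots> \<le> sqrt (G\<^sup>2)"
    using assms(3) by (rule real_sqrt_le_mono)
  finally show ?thesis
    using assms(2) by simp
qed

lemma mult_sqrt_eq:
  fixes k T G :: real
  assumes "0 \<le> k" "0 \<le> G" "G\<^sup>2 = k\<^sup>2 * T"
  shows "k * sqrt T = G"
proof -
  have "k * sqrt T = sqrt (k\<^sup>2 * T)"
    using assms(1) by (simp add: real_sqrt_mult)
  then show ?thesis
    using assms(2) by (simp add: assms(3)[symmetric])
qed

lemma has_field_derivative_within_glue: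
  fixes f g h :: "real \<Rightarrow> real"
  assumes "a \<le> b"
    and "(f has_real_derivative D) (at b within {a..b})"
    and "(g has_real_derivative D) (at b within {b..})"
    and "\<And>y. a \<le> y \<Longrightarrow> y \<le> b \<Longrightarrow> f y = h y"
    and "\<And>y. b \<le> y \<Longrightarrow> g y = h y"
  shows "(h has_real_derivative D) (at b within {a..})"
proof -
  have "(h has_real_derivative D) (at b within {a..b})"
    by (rule has_field_derivative_transform_within[OF assms(2), of 1]) (use assms in auto)
  moreover have "(h has_real_derivative D) (at b within {b..})"
    by (rule has_field_derivative_transform_within[OF assms(3), of 1]) (use assms in auto)
  moreover have "{a..} = {a..b} \<union> {b..}"
    using assms(1) by auto
  ultimately show ?thesis
    unfolding has_field_derivative_iff by (simp add: Lim_within_Un)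
qed

lemma taylor2_compare_of_antimono_deriv2:
  fixes f f1 f2 :: "real \<Rightarrow> real" and a X x :: real
  assumes f1: "\<And>t. a < t \<Longrightarrow> (f has_real_derivative f1 t) (at t)"
    and f2: "\<And>t. a < t \<Longrightarrow> (f1 has_real_derivative f2 t) (at t)"
    and antimono: "\<And>s t. a < s \<Longrightarrow> s \<le> t \<Longrightarrow> f2 t \<le> f2 s"
    and "a < X" "a < x"
  defines "T \<equiv> f X + f1 X * (x - X) + 1/2 * f2 X * (x - X)\<^sup>2"
  shows "X \<le> x \<Longrightarrow> f x \<le> T" and "x \<le> X \<Longrightarrow> T \<le> f x"
proof -
  define g where "g t = f t - (f X + f1 X * (t - X) + 1/2 * f2 X * (t - X)\<^sup>2)" for t
  define g1 where "g1 t = f1 t - (f1 X + f2 X * (t - X))" for t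
  have g1_deriv: "(g1 has_real_derivative f2 t - f2 X) (at t)" if "a < t" for t
    unfolding g1_def[abs_def] using f2[OF that] by (auto intro!: derivative_eq_intros)
  have g_deriv: "(g has_real_derivative g1 t) (at t)" if "a < t" for t
    unfolding g_def[abs_def] g1_def by (rule derivative_eq_intros f1[OF that] refl | simp)+
  \<comment> \<open>\<open>g1\<close> increases up to \<open>X\<close> and decreases afterwards, so its maximum is \<open>g1 X = 0\<close>\<close>
  have g1_nonpos: "g1 t \<le> 0" if "a < t" for t
  proof (cases "t \<le> X")
    case True
    have "g1 t \<le> g1 X"
    proof (rule DERIV_nonneg_imp_nondecreasing[where f = g1, OF True])
      fix s
      assume "t \<le> s" "s \<le> X"
      then show "\<exists>y. (g1 has_real_derivative y) (at s) \<and> 0 \<le> y"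
        using that g1_deriv[of s] antimono[of s X] by auto
    qed
    then show ?thesis
      unfolding g1_def by simp
  next
    case False
    have "g1 t \<le> g1 X"
    proof (rule DERIV_nonpos_imp_nonincreasing[where f = g1])
      show "X \<le> t"
        using False by simp
    next
      fix s
      assume "X \<le> s" "s \<le> t"
      then show "\<exists>y. (g1 has_real_derivative y) (at s) \<and> y \<le> 0"
        using \<open>a < X\<close> g1_deriv[of s] antimono[of X s] by auto
    qed
    then show ?thesis
      unfolding g1_def by simp
  qed
  have g_antimono: "g t \<le> g s" if "a < s" "s \<le> t" for s t
  proof (rule DERIV_nonpos_imp_nonincreasing[where f = g, OF that(2)])
    fix r
    assume "s \<le> r" "r \<le> t"
    then show "\<exists>y. (g has_real_derivative y) (at r) \<and> y \<le> 0"
      using that g_deriv[of r] g1_nonpos[of r] by auto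
  qed
  have "g X = 0"
    unfolding g_def by simp
  then show "X \<le> x \<Longrightarrow> f x \<le> T" and "x \<le> X \<Longrightarrow> T \<le> f x"
    using g_antimono[of X x] g_antimono[of x X] assms(4,5) unfolding g_def T_def by auto
qed

section \<open>The constant \<open>y_n\<close>\<close>

lemma sin_treble_sin: "sin (3 * x) = 3 * sin x - 4 * sin (x::real) ^ 3"
proof -
  have "sin (3 * x) = sin (2 * x) * cos x + cos (2 * x) * sin x"
    using sin_add[of "2 * x" x] by simp
  also have "\<dots> = 2 * sin x * cos x ^ 2 + (1 - 2 * sin x ^ 2) * sin x"
    by (simp add: sin_double cos_double_sin power2_eq_square)
  also have "\<dots> = 3 * sin x - 4 * sin x ^ 3"
    using sin_cos_squared_add[of x] by algebra
  finally show ?thesis .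
qed

lemma sqrt_one_minus_cos_ratio:
  fixes \<theta> :: real
  assumes "0 < \<theta>" "\<theta> < pi / 2"
  defines "q \<equiv> 1 - cos \<theta> / cos (\<theta> / 3)"
  shows "sqrt q * (3 - q) / 2 = sin \<theta>"
proof -
  define \<phi> where "\<phi> = \<theta> / 3"
  have \<theta>: "\<theta> = 3 * \<phi>" unfolding \<phi>_def by simp
  have "cos (\<theta> / 3) > cos \<theta>"
    using assms by (intro cos_monotone_0_pi) auto
  moreover have "cos \<theta> > 0"
    using assms by (intro cos_gt_zero) auto
  ultimately have q: "q = 4 * (sin \<phi>)\<^sup>2"
    unfolding q_def \<phi>_def[symmetric] \<theta> cos_treble_cos
    apply (simp add: field_simps power2_eq_square power3_eq_cube)
    using sin_cos_squared_add[of \<phi>] by algebra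
  have "sin \<phi> > 0"
    unfolding \<phi>_def using assms by (intro sin_gt_zero) auto
  then have "sqrt q = 2 * sin \<phi>"
    unfolding q by (simp add: real_sqrt_mult)
  then have "sqrt q * (3 - q) / 2 = sin \<phi> * (3 - q)"
    by simp
  also have "\<dots> = 3 * sin \<phi> - 4 * sin \<phi> ^ 3"
    unfolding q by (simp add: algebra_simps power2_eq_square power3_eq_cube)
  also have "\<dots> = sin \<theta>"
    unfolding \<theta> sin_treble_sin ..
  finally show ?thesis .
qed

lemma
  assumes "n \<ge> 3"
  shows y_n_pos: "y_n n > 0"
    and y_n_cubic: "sqrt (y_n n / (y_n n + 4 * (real n - 1))) * (3 - y_n n / (y_n n + 4 * (real n - 1))) / 2
      = ((real n)\<^sup>2 - 4 * real n + 6) / ((real n)\<^sup>2 - 4)"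
proof -
  define N where "N = real n"
  have N: "N \<ge> 3"
    using assms unfolding N_def by simp
  define w where "w = sqrt (2 * N - 5)"
  have w: "w > 0" "w\<^sup>2 = 2 * N - 5"
    unfolding w_def using N by simp_all
  have num_pos: "N\<^sup>2 - 4 * N + 6 > 0" and den_pos: "N\<^sup>2 - 4 > 0"
  proof -
    have "N\<^sup>2 - 4 * N + 6 = (N - 2)\<^sup>2 + 2" "N\<^sup>2 - 4 = (N - 2) * (N + 2)"
      by (simp_all add: power2_eq_square algebra_simps)
    then show "N\<^sup>2 - 4 * N + 6 > 0" "N\<^sup>2 - 4 > 0"
      using N by (smt (verit) zero_le_power2, simp)
  qed
  define T where "T = (N\<^sup>2 - 4 * N + 6) / (2 * (N - 1) * w)"
  define \<theta> where "\<theta> = arctan T"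
  have "1 + T\<^sup>2 = ((N\<^sup>2 - 4) / (2 * (N - 1) * w))\<^sup>2"
    unfolding T_def using w N
    by (simp add: power_divide field_simps) algebra
  hence root: "sqrt (1 + T\<^sup>2) = (N\<^sup>2 - 4) / (2 * (N - 1) * w)"
    using den_pos w N by simp
  have cos_\<theta>: "cos \<theta> = 2 * (N - 1) * w / (N\<^sup>2 - 4)"
    unfolding \<theta>_def cos_arctan root by simp
  have "sin \<theta> = T * (2 * (N - 1) * w / (N\<^sup>2 - 4))"
    unfolding \<theta>_def sin_arctan root by simp
  also have "\<dots> = (N\<^sup>2 - 4 * N + 6) / (N\<^sup>2 - 4)"
    unfolding T_def using w N den_pos by (simp add: divide_simps)
  finally have sin_\<theta>: "sin \<theta> = (N\<^sup>2 - 4 * N + 6) / (N\<^sup>2 - 4)" .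
  have \<theta>_pos: "0 < \<theta>"
    unfolding \<theta>_def T_def using w N num_pos by (simp add: arctan_less_iff[of 0, simplified])
  have \<theta>_less: "\<theta> < pi / 2"
    unfolding \<theta>_def by (rule arctan_ubound)
  have cos_less: "cos \<theta> < cos (\<theta> / 3)" and cos_pos: "cos \<theta> > 0"
    using \<theta>_pos \<theta>_less by (auto intro!: cos_monotone_0_pi cos_gt_zero)
  have y: "y_n n = 4 * (N - 1) * (cos (\<theta> / 3) / cos \<theta> - 1)"
    unfolding y_n_def N_def[symmetric] w_def[symmetric] T_def[symmetric] \<theta>_def[symmetric] cos_\<theta>
    using w N den_pos by (simp add: field_simps)
  have "cos (\<theta> / 3) / cos \<theta> - 1 > 0"
    using cos_less cos_pos by (simp add: field_simps)
  then show "y_n n > 0"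
    unfolding y using N by simp
  have Q: "y_n n / (y_n n + 4 * (N - 1)) = 1 - cos \<theta> / cos (\<theta> / 3)"
    unfolding y using cos_less cos_pos N by (simp add: field_simps)
  show "sqrt (y_n n / (y_n n + 4 * (real n - 1))) * (3 - y_n n / (y_n n + 4 * (real n - 1))) / 2
      = ((real n)\<^sup>2 - 4 * real n + 6) / ((real n)\<^sup>2 - 4)"
    unfolding N_def[symmetric] Q sqrt_one_minus_cos_ratio[OF \<theta>_pos \<theta>_less] sin_\<theta> ..
qed

section \<open>Algebraic identities\<close>

text \<open>The algebra behind \<open>alpha\<close>: with \<open>S = sqrt (x\<^sup>2 + 4 (N - 1) c x)\<close>, the terms \<open>al\<close>,
  \<open>a1\<close>, \<open>a2\<close> below are \<open>alpha\<close> and its first two derivatives at \<open>x\<close>.\<close>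

lemma alpha_form_identities:
  fixes N c x S :: real
  assumes N: "N > 2" and S: "S > 0" "S\<^sup>2 = x\<^sup>2 + 4 * (N - 1) * c * x"
  defines "al \<equiv> N * c + N / (2 * (N - 1)) * x - (N - 2) / (2 * (N - 1)) * S"
    and "a1 \<equiv> N / (2 * (N - 1)) - (N - 2) / (2 * (N - 1)) * (x + 2 * (N - 1) * c) / S"
    and "a2 \<equiv> 2 * (N - 2) * (N - 1) * c\<^sup>2 / S ^ 3"
    and "K \<equiv> (N - 2)\<^sup>2 / (N * (N - 1))"
  shows "(al + N * c) * x * a1 = 2 * c * x + al\<^sup>2 - N * c * al"
    and "x * a1\<^sup>2 + (al + N * c) * x * a2 + 2 * N * c * a1 - al * a1 - 2 * c = 0"
    and "(2 * x / N + N * c - al)\<^sup>2 = K * x * (al - x / N)"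
    and "2 * (2 * x / N + N * c - al) * (2 / N - a1) = K * ((al - x / N) + x * (a1 - 1 / N))"
proof -
  define m where "m = N - 1"
  have nz: "m \<noteq> 0" "N \<noteq> 0" "S \<noteq> 0" and N_eq: "N = m + 1"
    using N S unfolding m_def by auto
  have S_sq: "S\<^sup>2 = x\<^sup>2 + 4 * m * c * x"
    using S(2) unfolding m_def .
  have al: "al = N * c + N / (2 * m) * x - (N - 2) / (2 * m) * S"
    unfolding al_def m_def ..
  have a1: "a1 = N / (2 * m) - (N - 2) / (2 * m) * (x + 2 * m * c) / S"
    unfolding a1_def m_def ..
  have a2: "a2 = 2 * (N - 2) * m * c\<^sup>2 / S ^ 3"
    unfolding a2_def m_def ..
  have K: "K = (N - 2)\<^sup>2 / (N * m)"
    unfolding K_def m_def ..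
  show "(al + N * c) * x * a1 = 2 * c * x + al\<^sup>2 - N * c * al"
    unfolding al a1 using nz
    apply (simp add: field_simps power2_eq_square)
    using S_sq N_eq by (simp add: power2_eq_square) algebra
  show "x * a1\<^sup>2 + (al + N * c) * x * a2 + 2 * N * c * a1 - al * a1 - 2 * c = 0"
    unfolding al a1 a2 using nz
    apply (simp add: field_simps power2_eq_square power3_eq_cube)
    using S_sq N_eq by (simp add: power2_eq_square) algebra
  show "(2 * x / N + N * c - al)\<^sup>2 = K * x * (al - x / N)"
    unfolding al K using nz
    apply (simp add: field_simps power2_eq_square)
    using S_sq N_eq by (simp add: power2_eq_square) algebra
  show "2 * (2 * x / N + N * c - al) * (2 / N - a1) = K * ((al - x / N) + x * (a1 - 1 / N))"
    unfolding al a1 K using nz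
    apply (simp add: field_simps power2_eq_square)
    using S_sq N_eq by algebra
qed

lemma alpha_form_gap_sq_deriv2:
  fixes N c x S :: real
  assumes N: "N > 2" and S: "S > 0" "S\<^sup>2 = x\<^sup>2 + 4 * (N - 1) * c * x"
  defines "al \<equiv> N * c + N / (2 * (N - 1)) * x - (N - 2) / (2 * (N - 1)) * S"
    and "a1 \<equiv> N / (2 * (N - 1)) - (N - 2) / (2 * (N - 1)) * (x + 2 * (N - 1) * c) / S"
    and "a2 \<equiv> 2 * (N - 2) * (N - 1) * c\<^sup>2 / S ^ 3"
    and "K \<equiv> (N - 2)\<^sup>2 / (N * (N - 1))"
  shows "(2 / N - a1)\<^sup>2 - a2 * (2 * x / N + N * c - al) = K * ((a1 - 1 / N) + x * a2 / 2)"
proof -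
  define m where "m = N - 1"
  have nz: "m \<noteq> 0" "N \<noteq> 0" "S \<noteq> 0"
    using N S unfolding m_def by auto
  \<comment> \<open>in the variables \<open>z = x / S\<close>, \<open>b = 2 m c / S\<close> the constraint on \<open>S\<close> reads \<open>z\<^sup>2 + 2 z b = 1\<close>\<close>
  define z b where "z = x / S" and "b = 2 * m * c / S"
  define \<rho> k q where "\<rho> = (N - 2) / N" and "k = (N - 2) / (2 * m)" and "q = 1 + \<rho>"
  have "S\<^sup>2 * (z\<^sup>2 + 2 * z * b) = x\<^sup>2 + 4 * m * c * x"
    unfolding z_def b_def using nz by (simp add: field_simps power2_eq_square)
  then have "S\<^sup>2 * (z\<^sup>2 + 2 * z * b) = S\<^sup>2"
    using S(2) unfolding m_def by simp
  then have zb: "z\<^sup>2 + 2 * z * b = 1"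
    using nz by simp
  have zS: "z * S = x"
    unfolding z_def using nz by simp
  have q: "q \<noteq> 0" "\<rho> = q - 1" "k = \<rho> / q"
    unfolding q_def \<rho>_def k_def m_def using N by (auto simp: field_simps)
  have slope: "2 / N - N / (2 * m) = - (k * \<rho>)"
    unfolding k_def \<rho>_def using nz unfolding m_def by (simp add: field_simps)
  have gap: "2 * x / N + N * c - al = k * (S - \<rho> * z * S)"
  proof -
    have "\<rho> * z * S = \<rho> * x"
      using zS by (simp add: mult.assoc)
    moreover have "2 * x / N + N * c - al = (2 / N - N / (2 * m)) * x + k * S"
      unfolding al_def k_def m_def by (simp add: algebra_simps)
    ultimately show ?thesis
      unfolding slope by (simp only:) (simp add: algebra_simps)
  qed
  have a1: "2 / N - a1 = k * (z + b - \<rho>)"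
  proof -
    have "2 / N - a1 = (2 / N - N / (2 * m)) + k * ((x + 2 * m * c) / S)"
      unfolding a1_def k_def m_def by (simp add: algebra_simps)
    then show ?thesis
      unfolding slope z_def b_def by (simp add: algebra_simps add_divide_distrib)
  qed
  have a2: "a2 = k * b\<^sup>2 / S"
    unfolding a2_def k_def b_def m_def[symmetric] using nz
    by (simp add: field_simps power2_eq_square power3_eq_cube)
  have K: "K = 2 * k * \<rho>"
    unfolding K_def k_def \<rho>_def m_def[symmetric] using nz
    by (simp add: field_simps power2_eq_square)
  have a1': "a1 - 1 / N = (1 - \<rho>) / 2 - k * (z + b - \<rho>)"
    using a1 nz unfolding \<rho>_def by (simp add: field_simps)
  have xa2: "x * a2 / 2 = k * b\<^sup>2 * z / 2"
    unfolding a2 z_def using nz by simp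
  show ?thesis
    unfolding xa2 a1 a2 gap K a1' q(3) unfolding q(2) using nz q(1)
    apply (simp add: field_simps power2_eq_square)
    using zb zS by algebra
qed

lemma alpha_form_closed_forms:
  fixes N c x S :: real
  assumes N: "N > 2" and S: "S > 0" "S\<^sup>2 = x\<^sup>2 + 4 * (N - 1) * c * x"
  defines "al \<equiv> N * c + N / (2 * (N - 1)) * x - (N - 2) / (2 * (N - 1)) * S"
    and "a1 \<equiv> N / (2 * (N - 1)) - (N - 2) / (2 * (N - 1)) * (x + 2 * (N - 1) * c) / S"
    and "a2 \<equiv> 2 * (N - 2) * (N - 1) * c\<^sup>2 / S ^ 3"
  shows "2 * x * a2 + a1 = N / (2 * (N - 1)) - (N - 2) / (2 * (N - 1)) * ((x / S) * (3 - (x / S)\<^sup>2) / 2)"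
    and "al - x * a1 = N * c - (N - 2) * c * x / S"
    and "2 * x / N + N * c - al = (N - 2) / (2 * (N - 1)) * (S - (N - 2) / N * x)"
    and "a2 * x\<^sup>2 / 2 = (N - 2) * c * x / S * ((N - 1) * c * x / S\<^sup>2)"
proof -
  define m where "m = N - 1"
  have nz: "m \<noteq> 0" "N \<noteq> 0" "S \<noteq> 0"
    using N S unfolding m_def by auto
  have S_sq: "S\<^sup>2 = x\<^sup>2 + 4 * m * c * x"
    using S(2) unfolding m_def .
  have al: "al = N * c + N / (2 * m) * x - (N - 2) / (2 * m) * S"
    unfolding al_def m_def ..
  have a1: "a1 = N / (2 * m) - (N - 2) / (2 * m) * (x + 2 * m * c) / S"
    unfolding a1_def m_def ..
  show "2 * x * a2 + a1 = N / (2 * (N - 1)) - (N - 2) / (2 * (N - 1)) * ((x / S) * (3 - (x / S)\<^sup>2) / 2)"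
  proof -
    define z b k where "z = x / S" and "b = 2 * m * c / S" and "k = (N - 2) / (2 * m)"
    have "S\<^sup>2 * (z\<^sup>2 + 2 * z * b) = x\<^sup>2 + 4 * m * c * x"
      unfolding z_def b_def using nz by (simp add: field_simps power2_eq_square)
    then have "S\<^sup>2 * (z\<^sup>2 + 2 * z * b) = S\<^sup>2"
      using S_sq by simp
    then have zb: "z\<^sup>2 + 2 * z * b = 1"
      using nz by simp
    have a2': "2 * x * a2 = 2 * k * b\<^sup>2 * z"
      unfolding a2_def k_def b_def z_def m_def[symmetric] using nz
      by (simp add: field_simps power2_eq_square power3_eq_cube)
    have a1': "a1 = N / (2 * m) - k * (z + b)"
      unfolding a1 k_def z_def b_def using nz by (simp add: field_simps)
    have "- (z + b) + 2 * b\<^sup>2 * z + z * (3 - z\<^sup>2) / 2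
        = (z / 2) * (1 - 2 * b * z - z\<^sup>2) - b * (1 - z\<^sup>2 - 2 * z * b)"
      by (simp add: field_simps power2_eq_square)
    also have "\<dots> = 0"
      using zb by (simp add: algebra_simps)
    finally have vanish: "- (z + b) + 2 * b\<^sup>2 * z + z * (3 - z\<^sup>2) / 2 = 0" .
    have "2 * x * a2 + a1
        = N / (2 * m) - k * (z * (3 - z\<^sup>2) / 2) + k * (- (z + b) + 2 * b\<^sup>2 * z + z * (3 - z\<^sup>2) / 2)"
      unfolding a2' a1' by (simp add: algebra_simps)
    then have "2 * x * a2 + a1 = N / (2 * m) - k * (z * (3 - z\<^sup>2) / 2)"
      by (simp only: vanish mult_zero_right add_0_right)
    then show ?thesis
      unfolding k_def z_def m_def .
  qed
  show "al - x * a1 = N * c - (N - 2) * c * x / S"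
    unfolding al a1 using nz
    apply (simp add: field_simps power2_eq_square)
    using S_sq by algebra
  have slope: "2 / N - N / (2 * m) = - ((N - 2) / (2 * m) * ((N - 2) / N))"
    using nz unfolding m_def by (simp add: field_simps)
  have "2 * x / N + N * c - al = (2 / N - N / (2 * m)) * x + (N - 2) / (2 * m) * S"
    unfolding al by (simp add: algebra_simps)
  then have "2 * x / N + N * c - al = (N - 2) / (2 * m) * (S - (N - 2) / N * x)"
    unfolding slope by (simp add: algebra_simps)
  then show "2 * x / N + N * c - al = (N - 2) / (2 * (N - 1)) * (S - (N - 2) / N * x)"
    unfolding m_def .
  show "a2 * x\<^sup>2 / 2 = (N - 2) * c * x / S * ((N - 1) * c * x / S\<^sup>2)"
    unfolding a2_def using nz by (simp add: field_simps power2_eq_square power3_eq_cube)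
qed

text \<open>The defects of (ii) and (vi) for the quadratic \<open>b = a0 + a1 d + a2 d\<^sup>2 / 2\<close>,
  expanded in powers of \<open>d = x - X\<close>.\<close>

lemma taylor2_ode_defect_expansion:
  fixes N c X a0 a1 a2 d :: real
  defines "b \<equiv> a0 + a1 * d + 1/2 * a2 * d\<^sup>2"
  shows "(b + N * c) * (X + d) * (a1 + a2 * d) - (2 * c * (X + d) + b\<^sup>2 - N * c * b)
   = ((a0 + N * c) * X * a1 - (2 * c * X + a0\<^sup>2 - N * c * a0))
     + d * (X * a1\<^sup>2 + (a0 + N * c) * X * a2 + 2 * N * c * a1 - a0 * a1 - 2 * c)
     + a2 / 4 * d\<^sup>2 * (6 * (N * c + X * a1) + 2 * (a1 + X * a2) * d + a2 * d\<^sup>2)"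
  unfolding b_def by (simp add: field_simps power2_eq_square)

lemma taylor2_gap_defect_expansion:
  fixes N c X a0 a1 a2 d K :: real
  assumes "N \<noteq> 0"
  defines "b \<equiv> a0 + a1 * d + 1/2 * a2 * d\<^sup>2"
  shows "(2 * (X + d) / N + N * c - b)\<^sup>2 - K * (X + d) * (b - (X + d) / N)
   = ((2 * X / N + N * c - a0)\<^sup>2 - K * X * (a0 - X / N))
     + d * (2 * (2 * X / N + N * c - a0) * (2 / N - a1) - K * ((a0 - X / N) + X * (a1 - 1 / N)))
     + d\<^sup>2 * ((2 / N - a1)\<^sup>2 - a2 * (2 * X / N + N * c - a0) - K * ((a1 - 1 / N) + X * a2 / 2))
     + a2 / 4 * d ^ 3 * (a2 * d - 4 * (2 / N - a1) - 2 * K)"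
  using assms by (simp add: field_simps power2_eq_square power3_eq_cube)

section \<open>The functions \<open>alpha\<close>, \<open>beta\<close> and \<open>gamma\<close>\<close>

definition alpha_root :: "nat \<Rightarrow> real \<Rightarrow> real \<Rightarrow> real" where
  "alpha_root n c x = sqrt (x\<^sup>2 + 4 * (real n - 1) * c * x)"

definition alpha1 :: "nat \<Rightarrow> real \<Rightarrow> real \<Rightarrow> real" where
  "alpha1 n c x = real n / (2 * (real n - 1))
     - (real n - 2) / (2 * (real n - 1)) * (x + 2 * (real n - 1) * c) / alpha_root n c x"

definition alpha2 :: "nat \<Rightarrow> real \<Rightarrow> real \<Rightarrow> real" where
  "alpha2 n c x = 2 * (real n - 2) * (real n - 1) * c\<^sup>2 / (alpha_root n c x) ^ 3"

definition gamma1 :: "nat \<Rightarrow> real \<Rightarrow> real \<Rightarrow> real" where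
  "gamma1 n c x = (if x0 n c \<le> x then alpha1 n c x
     else alpha1 n c (x0 n c) + alpha2 n c (x0 n c) * (x - x0 n c))"

definition gamma2 :: "nat \<Rightarrow> real \<Rightarrow> real \<Rightarrow> real" where
  "gamma2 n c x = (if x0 n c \<le> x then alpha2 n c x else alpha2 n c (x0 n c))"

locale gamma_setting =
  fixes n :: nat and c :: real
  assumes n_ge_3: "n \<ge> 3" and c_pos: "c > 0"
begin

abbreviation "X \<equiv> x0 n c"
abbreviation "A0 \<equiv> alpha n c X"
abbreviation "A1 \<equiv> alpha1 n c X"
abbreviation "A2 \<equiv> alpha2 n c X"
abbreviation "beta1 x \<equiv> A1 + A2 * (x - X)"
abbreviation "K \<equiv> (real n - 2)\<^sup>2 / (real n * (real n - 1))"

lemma real_n_ge_3: "real n \<ge> 3"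
  using n_ge_3 by simp

lemma slope_pos: "(real n - 2) / (2 * (real n - 1)) > 0"
  using real_n_ge_3 by simp

lemma slope_diff: "real n / (2 * (real n - 1)) - (real n - 2) / (2 * (real n - 1)) = 1 / (real n - 1)"
proof -
  have "real n / (2 * (real n - 1)) - (real n - 2) / (2 * (real n - 1))
      = (2 * 1) / (2 * (real n - 1))"
    by (simp add: diff_divide_distrib)
  also have "\<dots> = 1 / (real n - 1)"
    by (rule nonzero_mult_divide_mult_cancel_left) simp
  finally show ?thesis .
qed

lemma vi_coeff_sq: "((real n - 2) / sqrt (real n * (real n - 1)))\<^sup>2 = K"
  using real_n_ge_3 by (simp add: power_divide)

lemma alpha_eq: "alpha n c x = real n * c + real n / (2 * (real n - 1)) * x
    - (real n - 2) / (2 * (real n - 1)) * alpha_root n c x"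
  unfolding alpha_def alpha_root_def ..

lemma alpha_at_0: "alpha n c 0 = real n * c"
  unfolding alpha_def by simp

lemma
  assumes "x > 0"
  shows alpha_root_pos: "alpha_root n c x > 0"
    and alpha_root_sq: "(alpha_root n c x)\<^sup>2 = x\<^sup>2 + 4 * (real n - 1) * c * x"
    and alpha_root_gt: "x < alpha_root n c x"
    and alpha_root_less: "alpha_root n c x < x + 2 * (real n - 1) * c"
proof -
  have rad: "x\<^sup>2 + 4 * (real n - 1) * c * x > 0"
    using assms real_n_ge_3 c_pos by (simp add: add_pos_pos)
  show "alpha_root n c x > 0" "(alpha_root n c x)\<^sup>2 = x\<^sup>2 + 4 * (real n - 1) * c * x"
    unfolding alpha_root_def using rad by simp_all
  show "x < alpha_root n c x"
    unfolding alpha_root_def using assms real_n_ge_3 c_pos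
    by (intro real_less_rsqrt) (simp add: add_pos_pos)
  have "(x + 2 * (real n - 1) * c)\<^sup>2 = x\<^sup>2 + 4 * (real n - 1) * c * x + 4 * ((real n - 1) * c)\<^sup>2"
    by (simp add: power2_eq_square algebra_simps)
  moreover have "4 * ((real n - 1) * c)\<^sup>2 > 0"
    using real_n_ge_3 c_pos by simp
  ultimately have "x\<^sup>2 + 4 * (real n - 1) * c * x < (x + 2 * (real n - 1) * c)\<^sup>2"
    by linarith
  moreover have "0 \<le> x + 2 * (real n - 1) * c"
    using assms real_n_ge_3 c_pos by simp
  ultimately show "alpha_root n c x < x + 2 * (real n - 1) * c"
    unfolding alpha_root_def by (intro real_less_lsqrt)
qed

lemma root_ratio_bounds:
  assumes "x > 0"
  shows "0 < x / alpha_root n c x" "x / alpha_root n c x < 1"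
  using assms alpha_root_pos[OF assms] alpha_root_gt[OF assms] by auto

lemma root_ratio_sq:
  assumes "x > 0"
  shows "(x / alpha_root n c x)\<^sup>2 = x / (x + 4 * (real n - 1) * c)"
proof -
  have "(x / alpha_root n c x)\<^sup>2 = x\<^sup>2 / (x\<^sup>2 + 4 * (real n - 1) * c * x)"
    by (simp add: power_divide alpha_root_sq[OF assms])
  also have "\<dots> = (x * x) / (x * (x + 4 * (real n - 1) * c))"
    by (simp add: power2_eq_square algebra_simps)
  also have "\<dots> = x / (x + 4 * (real n - 1) * c)"
    using assms by simp
  finally show ?thesis .
qed

lemma root_ratio_strict_mono:
  assumes "0 < x" "x < y"
  shows "x / alpha_root n c x < y / alpha_root n c y"
proof -
  define M where "M = 4 * (real n - 1) * c"
  have y: "y > 0"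
    using assms by simp
  have "M > 0"
    unfolding M_def using real_n_ge_3 c_pos by simp
  then have "M / (y + M) < M / (x + M)"
    using assms by (intro divide_strict_left_mono) auto
  then have "x / (x + M) < y / (y + M)"
    using \<open>M > 0\<close> assms by (simp add: field_simps)
  then have "(x / alpha_root n c x)\<^sup>2 < (y / alpha_root n c y)\<^sup>2"
    unfolding root_ratio_sq[OF assms(1)] root_ratio_sq[OF y] M_def .
  then show ?thesis
    using root_ratio_bounds[OF y] by (simp add: power_less_imp_less_base)
qed

lemma alpha_root_has_derivative:
  assumes "x > 0"
  shows "(alpha_root n c has_real_derivative (x + 2 * (real n - 1) * c) / alpha_root n c x) (at x)"
proof -
  have rad: "x\<^sup>2 + 4 * (real n - 1) * c * x > 0"
    using assms c_pos real_n_ge_3 by (simp add: add_pos_pos)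
  have "((\<lambda>x. x\<^sup>2 + 4 * (real n - 1) * c * x) has_real_derivative 2 * x + 4 * (real n - 1) * c) (at x)"
    by (auto intro!: derivative_eq_intros)
  from DERIV_chain2[OF DERIV_real_sqrt[OF rad] this]
  have "((\<lambda>x. sqrt (x\<^sup>2 + 4 * (real n - 1) * c * x)) has_real_derivative
      inverse (sqrt (x\<^sup>2 + 4 * (real n - 1) * c * x)) / 2 * (2 * x + 4 * (real n - 1) * c)) (at x)"
    .
  moreover have "inverse (sqrt (x\<^sup>2 + 4 * (real n - 1) * c * x)) / 2 * (2 * x + 4 * (real n - 1) * c)
     = (x + 2 * (real n - 1) * c) / sqrt (x\<^sup>2 + 4 * (real n - 1) * c * x)"
    using rad by (simp add: field_simps)
  ultimately show ?thesis
    unfolding alpha_root_def[abs_def] by (rule DERIV_cong)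
qed

lemma alpha_has_derivative:
  assumes "x > 0"
  shows "(alpha n c has_real_derivative alpha1 n c x) (at x)"
  unfolding alpha_eq[abs_def]
  by (rule derivative_eq_intros alpha_root_has_derivative[OF assms] refl | simp)+
    (simp add: alpha1_def mult_ac)

lemma alpha1_has_derivative:
  assumes "x > 0"
  shows "(alpha1 n c has_real_derivative alpha2 n c x) (at x)"
proof -
  define S where "S = alpha_root n c x"
  define m where "m = real n - 1"
  have S: "S > 0" "S\<^sup>2 = x\<^sup>2 + 4 * m * c * x"
    using alpha_root_pos[OF assms] alpha_root_sq[OF assms] unfolding S_def m_def by auto
  have m: "m \<noteq> 0"
    using real_n_ge_3 unfolding m_def by auto
  have quotient: "((\<lambda>x. (x + 2 * m * c) / alpha_root n c x) has_real_derivative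
      (1 * S - (x + 2 * m * c) * ((x + 2 * m * c) / S)) / (S * S)) (at x)"
    unfolding S_def using S(1)
    by (intro DERIV_divide) (auto intro!: derivative_eq_intros
        alpha_root_has_derivative[OF assms, unfolded m_def[symmetric]] simp: S_def)
  have alpha1_eq: "alpha1 n c = (\<lambda>x. real n / (2 * m) - (real n - 2) / (2 * m) * ((x + 2 * m * c) / alpha_root n c x))"
    unfolding alpha1_def[abs_def] m_def by simp
  have rad: "x\<^sup>2 + 4 * m * c * x \<noteq> 0"
    using S by (metis less_irrefl zero_less_power)
  have alpha2_eq: "alpha2 n c x = 2 * (real n - 2) * m * c\<^sup>2 / (S * (x\<^sup>2 + 4 * m * c * x))"
    unfolding alpha2_def S_def[symmetric] m_def[symmetric] S(2)[symmetric]
    by (simp add: power3_eq_cube power2_eq_square)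
  have "0 - (real n - 2) / (2 * m) * ((1 * S - (x + 2 * m * c) * ((x + 2 * m * c) / S)) / (S * S))
      = alpha2 n c x"
    unfolding alpha2_eq using S(1) m rad S(2)[symmetric]
    apply (simp add: field_simps power2_eq_square)
    using S(2) by algebra
  then show ?thesis
    unfolding alpha1_eq by (rule DERIV_cong[rotated]) (intro derivative_intros DERIV_cmult quotient)
qed

lemma
  assumes "x > 0"
  shows deriv_alpha: "deriv (alpha n c) x = alpha1 n c x"
    and deriv2_alpha: "deriv (deriv (alpha n c)) x = alpha2 n c x"
proof -
  show "deriv (alpha n c) x = alpha1 n c x"
    using alpha_has_derivative[OF assms] by (rule DERIV_imp_deriv)
  have "(deriv (alpha n c) has_real_derivative alpha2 n c x) (at x)"
  proof (rule has_field_derivative_transform_within_open[OF alpha1_has_derivative[OF assms], of "{0<..}"])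
    show "alpha1 n c y = deriv (alpha n c) y" if "y \<in> {0<..}" for y
      using alpha_has_derivative[of y] that by (simp add: DERIV_imp_deriv)
  qed (use assms in auto)
  then show "deriv (deriv (alpha n c)) x = alpha2 n c x"
    by (rule DERIV_imp_deriv)
qed

lemma alpha2_pos:
  assumes "x > 0"
  shows "alpha2 n c x > 0"
  unfolding alpha2_def using alpha_root_pos[OF assms] real_n_ge_3 c_pos by simp

lemma alpha2_antimono:
  assumes "0 < y" "y \<le> z"
  shows "alpha2 n c z \<le> alpha2 n c y"
proof -
  have "y\<^sup>2 + 4 * (real n - 1) * c * y \<le> z\<^sup>2 + 4 * (real n - 1) * c * z"
    using assms real_n_ge_3 c_pos by (intro add_mono power_mono mult_left_mono) auto
  then have "alpha_root n c y \<le> alpha_root n c z"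
    unfolding alpha_root_def by simp
  then have "(alpha_root n c y) ^ 3 \<le> (alpha_root n c z) ^ 3"
    using alpha_root_pos[OF assms(1)] by (intro power_mono) auto
  moreover have "(alpha_root n c y) ^ 3 > 0" "(alpha_root n c z) ^ 3 > 0"
    using alpha_root_pos assms by simp_all
  moreover have "2 * (real n - 2) * (real n - 1) * c\<^sup>2 \<ge> 0"
    using real_n_ge_3 c_pos by simp
  ultimately show ?thesis
    unfolding alpha2_def by (intro divide_left_mono) (auto intro: mult_pos_pos)
qed

lemma
  assumes "x > 0"
  shows alpha_ode: "(alpha n c x + real n * c) * x * alpha1 n c x
      = 2 * c * x + (alpha n c x)\<^sup>2 - real n * c * alpha n c x"
    and alpha_ode_deriv: "x * (alpha1 n c x)\<^sup>2 + (alpha n c x + real n * c) * x * alpha2 n c x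
      + 2 * real n * c * alpha1 n c x - alpha n c x * alpha1 n c x - 2 * c = 0"
    and alpha_gap_sq: "(2 * x / real n + real n * c - alpha n c x)\<^sup>2
      = K * x * (alpha n c x - x / real n)"
    and alpha_gap_sq_deriv: "2 * (2 * x / real n + real n * c - alpha n c x) * (2 / real n - alpha1 n c x)
      = K * ((alpha n c x - x / real n) + x * (alpha1 n c x - 1 / real n))"
    and alpha_gap_sq_deriv2: "(2 / real n - alpha1 n c x)\<^sup>2
      - alpha2 n c x * (2 * x / real n + real n * c - alpha n c x)
      = K * ((alpha1 n c x - 1 / real n) + x * alpha2 n c x / 2)"
    and alpha_i_form: "2 * x * alpha2 n c x + alpha1 n c x = real n / (2 * (real n - 1))
      - (real n - 2) / (2 * (real n - 1))
        * ((x / alpha_root n c x) * (3 - (x / alpha_root n c x)\<^sup>2) / 2)"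
    and alpha_tangent_intercept: "alpha n c x - x * alpha1 n c x
      = real n * c - (real n - 2) * c * x / alpha_root n c x"
    and alpha_gap_eq: "2 * x / real n + real n * c - alpha n c x
      = (real n - 2) / (2 * (real n - 1)) * (alpha_root n c x - (real n - 2) / real n * x)"
    and alpha2_mult_sq: "alpha2 n c x * x\<^sup>2 / 2
      = (real n - 2) * c * x / alpha_root n c x * ((real n - 1) * c * x / (alpha_root n c x)\<^sup>2)"
proof -
  have "real n > 2"
    using real_n_ge_3 by simp
  note I = alpha_form_identities[OF this alpha_root_pos[OF assms] alpha_root_sq[OF assms]]
    and D = alpha_form_gap_sq_deriv2[OF this alpha_root_pos[OF assms] alpha_root_sq[OF assms]]
    and C = alpha_form_closed_forms[OF this alpha_root_pos[OF assms] alpha_root_sq[OF assms]]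
  show "(alpha n c x + real n * c) * x * alpha1 n c x
      = 2 * c * x + (alpha n c x)\<^sup>2 - real n * c * alpha n c x"
    using I(1) unfolding alpha_eq alpha1_def .
  show "x * (alpha1 n c x)\<^sup>2 + (alpha n c x + real n * c) * x * alpha2 n c x
      + 2 * real n * c * alpha1 n c x - alpha n c x * alpha1 n c x - 2 * c = 0"
    using I(2) unfolding alpha_eq alpha1_def alpha2_def .
  show "(2 * x / real n + real n * c - alpha n c x)\<^sup>2 = K * x * (alpha n c x - x / real n)"
    using I(3) unfolding alpha_eq .
  show "2 * (2 * x / real n + real n * c - alpha n c x) * (2 / real n - alpha1 n c x)
      = K * ((alpha n c x - x / real n) + x * (alpha1 n c x - 1 / real n))"
    using I(4) unfolding alpha_eq alpha1_def .
  show "(2 / real n - alpha1 n c x)\<^sup>2 - alpha2 n c x * (2 * x / real n + real n * c - alpha n c x)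
      = K * ((alpha1 n c x - 1 / real n) + x * alpha2 n c x / 2)"
    using D unfolding alpha_eq alpha1_def alpha2_def .
  show "2 * x * alpha2 n c x + alpha1 n c x = real n / (2 * (real n - 1))
      - (real n - 2) / (2 * (real n - 1)) * ((x / alpha_root n c x) * (3 - (x / alpha_root n c x)\<^sup>2) / 2)"
    using C(1) unfolding alpha1_def alpha2_def .
  show "alpha n c x - x * alpha1 n c x = real n * c - (real n - 2) * c * x / alpha_root n c x"
    using C(2) unfolding alpha_eq alpha1_def .
  show "2 * x / real n + real n * c - alpha n c x
      = (real n - 2) / (2 * (real n - 1)) * (alpha_root n c x - (real n - 2) / real n * x)"
    using C(3) unfolding alpha_eq .
  show "alpha2 n c x * x\<^sup>2 / 2
      = (real n - 2) * c * x / alpha_root n c x * ((real n - 1) * c * x / (alpha_root n c x)\<^sup>2)"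
    using C(4) unfolding alpha2_def .
qed

lemma x0_pos: "X > 0"
  unfolding x0_def using y_n_pos[OF n_ge_3] c_pos by simp

lemma beta_eq: "beta n c x = A0 + A1 * (x - X) + 1/2 * A2 * (x - X)\<^sup>2"
  unfolding beta_def deriv_alpha[OF x0_pos] deriv2_alpha[OF x0_pos] ..

lemma gamma_eq: "gamma n c x = (if X \<le> x then alpha n c x else beta n c x)"
  unfolding gamma_def ..

lemma A2_pos: "A2 > 0"
  using alpha2_pos[OF x0_pos] .

lemma root_ratio_x0_cubic:
  "(X / alpha_root n c X) * (3 - (X / alpha_root n c X)\<^sup>2) / 2
     = ((real n)\<^sup>2 - 4 * real n + 6) / ((real n)\<^sup>2 - 4)"
proof -
  define y where "y = y_n n"
  have y: "y > 0"
    unfolding y_def using y_n_pos[OF n_ge_3] .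
  have "X = y * c"
    unfolding x0_def y_def ..
  then have "(X / alpha_root n c X)\<^sup>2 = (c * y) / (c * (y + 4 * (real n - 1)))"
    unfolding root_ratio_sq[OF x0_pos] by (simp add: algebra_simps)
  also have "\<dots> = y / (y + 4 * (real n - 1))"
    using c_pos by simp
  finally have sq: "(X / alpha_root n c X)\<^sup>2 = y / (y + 4 * (real n - 1))" .
  moreover have "X / alpha_root n c X = sqrt ((X / alpha_root n c X)\<^sup>2)"
    using x0_pos alpha_root_pos[OF x0_pos] by simp
  ultimately have root: "X / alpha_root n c X = sqrt (y / (y + 4 * (real n - 1)))"
    by simp
  show ?thesis
    unfolding sq unfolding root y_def by (rule y_n_cubic[OF n_ge_3])
qed

lemma alpha_i_at_x0: "2 * X * A2 + A1 = 3 / (real n + 2)"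
proof -
  have "2 * X * A2 + A1 = real n / (2 * (real n - 1))
      - (real n - 2) / (2 * (real n - 1)) * (((real n)\<^sup>2 - 4 * real n + 6) / ((real n)\<^sup>2 - 4))"
    unfolding alpha_i_form[OF x0_pos] root_ratio_x0_cubic ..
  also have "\<dots> = 3 / (real n + 2)"
  proof -
    obtain p q r where pqr: "p = real n - 1" "q = real n - 2" "r = real n + 2"
      by blast
    have "(real n)\<^sup>2 - 4 = q * r"
      unfolding pqr by (simp add: power2_eq_square algebra_simps)
    moreover have "p \<noteq> 0" "q \<noteq> 0" "r \<noteq> 0"
      using real_n_ge_3 unfolding pqr by auto
    then have "real n / (2 * p) - q / (2 * p) * (((real n)\<^sup>2 - 4 * real n + 6) / (q * r)) = 3 / r"
      apply (simp add: field_simps)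
      using pqr by algebra
    ultimately show ?thesis
      unfolding pqr by simp
  qed
  finally show ?thesis .
qed

lemma alpha_i:
  assumes "X \<le> x"
  shows "2 * x * alpha2 n c x + alpha1 n c x \<le> 3 / (real n + 2)"
    and "2 * x * alpha2 n c x + alpha1 n c x = 3 / (real n + 2) \<longleftrightarrow> x = X"
proof -
  have "2 * x * alpha2 n c x + alpha1 n c x < 3 / (real n + 2)" if "X < x"
  proof -
    have x: "x > 0"
      using that x0_pos by simp
    have "(X / alpha_root n c X) * (3 - (X / alpha_root n c X)\<^sup>2)
        < (x / alpha_root n c x) * (3 - (x / alpha_root n c x)\<^sup>2)"
      using root_ratio_bounds[OF x0_pos] root_ratio_bounds[OF x]
      by (intro cubic_strict_mono root_ratio_strict_mono[OF x0_pos that]) auto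
    then have "(X / alpha_root n c X) * (3 - (X / alpha_root n c X)\<^sup>2) / 2
        < (x / alpha_root n c x) * (3 - (x / alpha_root n c x)\<^sup>2) / 2"
      by (rule divide_strict_right_mono) simp
    then have "(real n - 2) / (2 * (real n - 1)) * ((X / alpha_root n c X) * (3 - (X / alpha_root n c X)\<^sup>2) / 2)
        < (real n - 2) / (2 * (real n - 1)) * ((x / alpha_root n c x) * (3 - (x / alpha_root n c x)\<^sup>2) / 2)"
      using slope_pos by (rule mult_strict_left_mono)
    then have "2 * x * alpha2 n c x + alpha1 n c x < 2 * X * A2 + A1"
      unfolding alpha_i_form[OF x] alpha_i_form[OF x0_pos] by linarith
    then show ?thesis
      unfolding alpha_i_at_x0 .
  qed
  then show "2 * x * alpha2 n c x + alpha1 n c x \<le> 3 / (real n + 2)"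
    and "2 * x * alpha2 n c x + alpha1 n c x = 3 / (real n + 2) \<longleftrightarrow> x = X"
    using assms alpha_i_at_x0 by force+
qed

lemma beta_i:
  assumes "x < X"
  shows "2 * x * A2 + beta1 x < 3 / (real n + 2)"
proof -
  have "2 * x * A2 + beta1 x = (2 * X * A2 + A1) + 3 * (A2 * (x - X))"
    by (simp add: algebra_simps)
  moreover have "A2 * (x - X) < 0"
    using A2_pos assms by (simp add: mult_pos_neg)
  ultimately show ?thesis
    unfolding alpha_i_at_x0 by linarith
qed

lemma alpha_bounds:
  assumes "x > 0"
  shows "x / (real n - 1) + 2 * c < alpha n c x" "alpha n c x < x / (real n - 1) + real n * c"
proof -
  obtain a b where ab: "a = real n / (2 * (real n - 1))" "b = (real n - 2) / (2 * (real n - 1))"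
    by blast
  have "x / (real n - 1) = (a - b) * x"
    unfolding ab slope_diff by simp
  then have "alpha n c x - x / (real n - 1)
      = real n * c + (real n - 2) / (2 * (real n - 1)) * (x - alpha_root n c x)"
    unfolding alpha_eq ab[symmetric] by (simp add: algebra_simps)
  moreover have "(real n - 2) / (2 * (real n - 1)) * (x - alpha_root n c x) < 0"
    by (rule mult_pos_neg) (use slope_pos alpha_root_gt[OF assms] in auto)
  moreover have "(real n - 2) / (2 * (real n - 1)) * (x - alpha_root n c x)
      > (real n - 2) / (2 * (real n - 1)) * (- (2 * (real n - 1) * c))"
    using slope_pos alpha_root_less[OF assms] by (intro mult_strict_left_mono) auto
  moreover have "(real n - 2) / (2 * (real n - 1)) * (- (2 * (real n - 1) * c)) = - ((real n - 2) * c)"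
    using real_n_ge_3 by simp
  ultimately show "x / (real n - 1) + 2 * c < alpha n c x" "alpha n c x < x / (real n - 1) + real n * c"
    by (simp_all add: algebra_simps)
qed

lemma A1_less: "A1 < 1 / (real n - 1)"
proof -
  have "(X + 2 * (real n - 1) * c) / alpha_root n c X > 1"
    using alpha_root_pos[OF x0_pos] alpha_root_less[OF x0_pos] by simp
  then have "(real n - 2) / (2 * (real n - 1)) * ((X + 2 * (real n - 1) * c) / alpha_root n c X)
      > (real n - 2) / (2 * (real n - 1)) * 1"
    using slope_pos by (intro mult_strict_left_mono) auto
  moreover have "A1 = real n / (2 * (real n - 1))
      - (real n - 2) / (2 * (real n - 1)) * ((X + 2 * (real n - 1) * c) / alpha_root n c X)"
    unfolding alpha1_def by simp
  ultimately show ?thesis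
    using slope_diff by linarith
qed

lemma alpha_gap_nonneg:
  assumes "x > 0"
  shows "2 * x / real n + real n * c - alpha n c x \<ge> 0"
proof -
  have "(real n - 2) / real n * x \<le> x"
    using real_n_ge_3 assms by (simp add: field_simps)
  then have "alpha_root n c x - (real n - 2) / real n * x \<ge> 0"
    using alpha_root_gt[OF assms] by simp
  then show ?thesis
    unfolding alpha_gap_eq[OF assms] using slope_pos by (intro mult_nonneg_nonneg) auto
qed

lemma alpha_gt_tangent:
  assumes "x > 0"
  shows "alpha n c x > x * alpha1 n c x"
proof -
  have "(real n - 2) * c * x / alpha_root n c x = (real n - 2) * c * (x / alpha_root n c x)"
    by simp
  also have "\<dots> < (real n - 2) * c * 1"
    using root_ratio_bounds[OF assms] real_n_ge_3 c_pos by (intro mult_strict_left_mono) auto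
  finally show ?thesis
    using alpha_tangent_intercept[OF assms] c_pos by (simp add: algebra_simps)
qed

lemma alpha_vi:
  assumes "x > 0"
  shows "(real n - 2) / sqrt (real n * (real n - 1)) * sqrt (x * (alpha n c x - x / real n)) + alpha n c x
     = 2 / real n * x + real n * c"
proof -
  have "(real n - 2) / sqrt (real n * (real n - 1)) * sqrt (x * (alpha n c x - x / real n))
      = 2 * x / real n + real n * c - alpha n c x"
    using alpha_gap_sq[OF assms] alpha_gap_nonneg[OF assms] real_n_ge_3 unfolding vi_coeff_sq[symmetric]
    by (intro mult_sqrt_eq) (auto simp: mult.assoc)
  then show ?thesis
    by simp
qed

lemma beta_at_0_less: "beta n c 0 < real n * c"
proof -
  have "(real n - 1) * c * X > 0"
    using x0_pos real_n_ge_3 c_pos by simp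
  moreover have "(alpha_root n c X)\<^sup>2 = X\<^sup>2 + 4 * ((real n - 1) * c * X)"
    unfolding alpha_root_sq[OF x0_pos] by (simp add: algebra_simps)
  ultimately have "(alpha_root n c X)\<^sup>2 > (real n - 1) * c * X"
    using x0_pos by (smt (verit) zero_less_power)
  moreover have "(alpha_root n c X)\<^sup>2 > 0"
    using alpha_root_pos[OF x0_pos] by simp
  ultimately have ratio: "(real n - 1) * c * X / (alpha_root n c X)\<^sup>2 < 1"
    by simp
  have pos: "(real n - 2) * c * X / alpha_root n c X > 0"
    using x0_pos alpha_root_pos[OF x0_pos] real_n_ge_3 c_pos by simp
  have "beta n c 0 = (A0 - X * A1) + A2 * X\<^sup>2 / 2"
    unfolding beta_eq by (simp add: algebra_simps power2_eq_square)
  also have "\<dots> = real n * c - (real n - 2) * c * X / alpha_root n c X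
      + (real n - 2) * c * X / alpha_root n c X * ((real n - 1) * c * X / (alpha_root n c X)\<^sup>2)"
    unfolding alpha_tangent_intercept[OF x0_pos] alpha2_mult_sq[OF x0_pos] ..
  also have "\<dots> < real n * c"
    using mult_strict_left_mono[OF ratio pos] by simp
  finally show ?thesis .
qed

text \<open>On \<open>[0, x0]\<close> the function \<open>beta x - x / (n - 1)\<close> is convex, hence it lies below
  the chord between its values at \<open>0\<close> and \<open>x0\<close>, both of which are below \<open>n c\<close>.\<close>

lemma beta_upper:
  assumes "0 \<le> x" "x \<le> X"
  shows "beta n c x < x / (real n - 1) + real n * c"
proof -
  define u where "u = x / X"
  have u: "0 \<le> u" "u \<le> 1"
    unfolding u_def using assms x0_pos by auto
  have chord: "beta n c x - x / (real n - 1)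
      = (1 - u) * beta n c 0 + u * (A0 - X / (real n - 1)) + A2 / 2 * x * (x - X)"
    unfolding u_def beta_eq using x0_pos real_n_ge_3 by (simp add: field_simps power2_eq_square)
  have "(1 - u) * beta n c 0 + u * (A0 - X / (real n - 1)) < real n * c"
    using u beta_at_0_less alpha_bounds(2)[OF x0_pos] by (intro convex_comb_less) auto
  moreover have "A2 / 2 * x * (x - X) \<le> 0"
    using A2_pos assms by (simp add: mult_nonneg_nonpos)
  ultimately show ?thesis
    using chord by linarith
qed

lemma beta_lower:
  assumes "x \<le> X"
  shows "x / (real n - 1) + 2 * c < beta n c x"
proof -
  have "beta n c x - x / (real n - 1) - (A0 - X / (real n - 1))
      = (A1 - 1 / (real n - 1)) * (x - X) + 1/2 * A2 * (x - X)\<^sup>2"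
    unfolding beta_eq by (simp add: algebra_simps diff_divide_distrib)
  moreover have "(A1 - 1 / (real n - 1)) * (x - X) \<ge> 0"
    using A1_less assms by (simp add: mult_nonpos_nonpos)
  moreover have "1/2 * A2 * (x - X)\<^sup>2 \<ge> 0"
    using A2_pos by simp
  moreover have "A0 - X / (real n - 1) > 2 * c"
    using alpha_bounds(1)[OF x0_pos] by simp
  ultimately show ?thesis
    by linarith
qed

lemma beta_gt_tangent:
  assumes "0 \<le> x" "x \<le> X"
  shows "beta n c x > x * beta1 x"
proof -
  have "beta n c x - x * beta1 x = (A0 - X * A1) + A2 / 2 * (X\<^sup>2 - x\<^sup>2)"
    unfolding beta_eq by (simp add: algebra_simps power2_eq_square)
  moreover have "X\<^sup>2 - x\<^sup>2 \<ge> 0"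
    using assms by (simp add: power_mono)
  moreover have "A0 - X * A1 > 0"
    using alpha_gt_tangent[OF x0_pos] by simp
  ultimately show ?thesis
    using A2_pos by (smt (verit) divide_nonneg_pos mult_nonneg_nonneg)
qed

lemma ode_weight_pos:
  assumes "0 \<le> x" "x \<le> X"
  shows "real n * c + x * beta1 x > 0"
proof -
  have "real n * c + x * beta1 x = (real n * c - beta n c 0) + beta n c x + A2 * x\<^sup>2 / 2"
    unfolding beta_eq by (simp add: algebra_simps power2_eq_square)
  moreover have "beta n c x > 0"
    using beta_lower[OF assms(2)] assms real_n_ge_3 c_pos by (smt (verit) divide_nonneg_pos)
  moreover have "A2 * x\<^sup>2 / 2 \<ge> 0"
    using A2_pos by simp
  ultimately show ?thesis
    using beta_at_0_less by linarith
qed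

text \<open>In the expansion of the defect of (ii) around \<open>x0\<close> the terms of order \<open>0\<close> and \<open>1\<close>
  vanish by the equation for \<open>alpha\<close>, and the factor left over is
  \<open>2 (n c + x0 beta1 x0) + 4 (n c + m beta1 m)\<close> with \<open>m\<close> the midpoint of \<open>x\<close> and \<open>x0\<close>.\<close>

lemma beta_ii:
  assumes "0 \<le> x" "x < X"
  shows "(beta n c x + real n * c) * x * beta1 x > 2 * c * x + (beta n c x)\<^sup>2 - real n * c * beta n c x"
proof -
  define d where "d = x - X"
  have d: "d < 0" "- X \<le> d" and x: "X + d = x"
    unfolding d_def using assms by auto
  have "6 * (real n * c + X * A1) + 2 * (A1 + X * A2) * d + A2 * d\<^sup>2
      = 2 * (real n * c + X * beta1 X) + 4 * (real n * c + (X + d / 2) * beta1 (X + d / 2))"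
    by (simp add: algebra_simps power2_eq_square)
  also have "\<dots> > 0"
    by (intro add_pos_pos mult_pos_pos ode_weight_pos) (use x0_pos d in auto)
  finally have "A2 / 4 * d\<^sup>2 * (6 * (real n * c + X * A1) + 2 * (A1 + X * A2) * d + A2 * d\<^sup>2) > 0"
    using A2_pos d by simp
  then show ?thesis
    using taylor2_ode_defect_expansion[of A0 A1 d A2 "real n" c X]
      alpha_ode[OF x0_pos] alpha_ode_deriv[OF x0_pos]
    unfolding beta_eq x d_def[symmetric] by simp
qed

lemma beta_gap_nonneg:
  assumes "0 \<le> x" "x \<le> X"
  shows "2 * x / real n + real n * c - beta n c x \<ge> 0"
proof -
  define u where "u = x / X"
  have u: "0 \<le> u" "u \<le> 1"
    unfolding u_def using assms x0_pos by auto
  have chord: "2 * x / real n + real n * c - beta n c x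
      = (1 - u) * (real n * c - beta n c 0) + u * (2 * X / real n + real n * c - A0) - A2 / 2 * x * (x - X)"
    unfolding u_def beta_eq using x0_pos real_n_ge_3 by (simp add: field_simps power2_eq_square)
  have "A2 / 2 * x * (x - X) \<le> 0"
    using A2_pos assms by (simp add: mult_nonneg_nonpos)
  moreover have "(1 - u) * (real n * c - beta n c 0) \<ge> 0"
    using u beta_at_0_less by simp
  moreover have "u * (2 * X / real n + real n * c - A0) \<ge> 0"
    using u alpha_gap_nonneg[OF x0_pos] by simp
  ultimately show ?thesis
    unfolding chord by linarith
qed

lemma beta_gap_defect_pos:
  assumes "x < X"
  shows "(2 * x / real n + real n * c - beta n c x)\<^sup>2 - K * x * (beta n c x - x / real n) > 0"
proof -
  define d where "d = x - X"
  have d: "d < 0" and x: "X + d = x"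
    unfolding d_def using assms by auto
  have "1 / (real n - 1) \<le> 2 / real n"
    using real_n_ge_3 by (simp add: field_simps)
  then have "2 / real n - A1 > 0"
    using A1_less by simp
  moreover have "K > 0"
    using real_n_ge_3 by simp
  ultimately have "A2 * d - 4 * (2 / real n - A1) - 2 * K < 0"
    using A2_pos d by (smt (verit) mult_pos_neg)
  moreover have "d ^ 3 < 0"
    using d by (simp add: power3_eq_cube mult_pos_neg mult_neg_neg)
  ultimately have "A2 / 4 * d ^ 3 * (A2 * d - 4 * (2 / real n - A1) - 2 * K) > 0"
    using A2_pos by (simp add: mult_neg_neg mult.assoc)
  moreover have "(2 * X / real n + real n * c - A0)\<^sup>2 - K * X * (A0 - X / real n) = 0"
    using alpha_gap_sq[OF x0_pos] by simp
  moreover have "2 * (2 * X / real n + real n * c - A0) * (2 / real n - A1)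
      - K * ((A0 - X / real n) + X * (A1 - 1 / real n)) = 0"
    using alpha_gap_sq_deriv[OF x0_pos] by simp
  moreover have "(2 / real n - A1)\<^sup>2 - A2 * (2 * X / real n + real n * c - A0)
      - K * ((A1 - 1 / real n) + X * A2 / 2) = 0"
    using alpha_gap_sq_deriv2[OF x0_pos] by simp
  moreover have "real n \<noteq> 0"
    using real_n_ge_3 by simp
  note expansion = taylor2_gap_defect_expansion[OF this, of X d c A0 A1 A2 K, unfolded x]
  ultimately show ?thesis
    unfolding beta_eq d_def[symmetric] expansion by simp
qed

lemma beta_vi:
  assumes "0 \<le> x" "x < X"
  shows "(real n - 2) / sqrt (real n * (real n - 1)) * sqrt (x * (beta n c x - x / real n)) + beta n c x
     \<le> 2 / real n * x + real n * c"
proof -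
  have "((real n - 2) / sqrt (real n * (real n - 1)))\<^sup>2 * (x * (beta n c x - x / real n))
      \<le> (2 * x / real n + real n * c - beta n c x)\<^sup>2"
    using beta_gap_defect_pos[OF assms(2)] unfolding vi_coeff_sq by (simp add: mult.assoc)
  then have "(real n - 2) / sqrt (real n * (real n - 1)) * sqrt (x * (beta n c x - x / real n))
      \<le> 2 * x / real n + real n * c - beta n c x"
    using beta_gap_nonneg assms real_n_ge_3 by (intro mult_sqrt_le) auto
  then show ?thesis
    by simp
qed

lemma
  assumes "x > 0"
  shows alpha_le_beta: "X \<le> x \<Longrightarrow> alpha n c x \<le> beta n c x"
    and beta_le_alpha: "x \<le> X \<Longrightarrow> beta n c x \<le> alpha n c x"
  unfolding beta_eq
  using taylor2_compare_of_antimono_deriv2[of 0 "alpha n c" "alpha1 n c" "alpha2 n c" X x]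
    alpha_has_derivative alpha1_has_derivative alpha2_antimono x0_pos assms
  by auto

lemma gamma_eq_min:
  assumes "0 \<le> x"
  shows "gamma n c x = min (alpha n c x) (beta n c x)"
proof (cases "X \<le> x")
  case True
  then show ?thesis
    using alpha_le_beta[of x] x0_pos by (simp add: gamma_eq)
next
  case False
  have "beta n c x \<le> alpha n c x"
  proof (cases "x = 0")
    case True
    then show ?thesis
      using beta_at_0_less alpha_at_0 by simp
  next
    case False
    then show ?thesis
      using beta_le_alpha[of x] assms \<open>\<not> X \<le> x\<close> by simp
  qed
  then show ?thesis
    using False by (simp add: gamma_eq)
qed

lemma gamma_has_derivative:
  assumes "0 \<le> x"
  shows "(gamma n c has_real_derivative gamma1 n c x) (at x within {0..})"
proof -
  have beta_deriv: "(beta n c has_real_derivative beta1 y) (at y)" for y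
  proof -
    have "((\<lambda>y. A0 + A1 * (y - X) + 1/2 * A2 * (y - X)\<^sup>2) has_real_derivative beta1 y) (at y)"
      by (rule DERIV_cong, (rule derivative_eq_intros refl)+) (simp add: algebra_simps)
    then show ?thesis
      unfolding beta_eq[abs_def] .
  qed
  consider "X < x" | "x = X" | "x < X"
    by linarith
  then show ?thesis
  proof cases
    case 1
    have "(gamma n c has_real_derivative alpha1 n c x) (at x)"
      by (rule has_field_derivative_transform_within_open[OF alpha_has_derivative, where S = "{X<..}"])
        (use 1 x0_pos in \<open>auto simp: gamma_eq\<close>)
    then show ?thesis
      using 1 by (simp add: gamma1_def has_field_derivative_at_within)
  next
    case 2
    have "(beta n c has_real_derivative A1) (at X within {0..X})"
      using beta_deriv[of X] by (simp add: has_field_derivative_at_within)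
    moreover have "(alpha n c has_real_derivative A1) (at X within {X..})"
      using alpha_has_derivative[OF x0_pos] by (simp add: has_field_derivative_at_within)
    ultimately have "(gamma n c has_real_derivative A1) (at X within {0..})"
      by (rule has_field_derivative_within_glue[rotated]) (use x0_pos in \<open>auto simp: gamma_eq beta_eq\<close>)
    then show ?thesis
      using 2 by (simp add: gamma1_def)
  next
    case 3
    have "(gamma n c has_real_derivative beta1 x) (at x)"
      by (rule has_field_derivative_transform_within_open[OF beta_deriv, where S = "{..<X}"])
        (use 3 in \<open>auto simp: gamma_eq\<close>)
    then show ?thesis
      using 3 by (simp add: gamma1_def has_field_derivative_at_within)
  qed
qed

lemma gamma1_has_derivative:
  assumes "0 \<le> x"
  shows "(gamma1 n c has_real_derivative gamma2 n c x) (at x within {0..})"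
proof -
  have beta1_deriv: "((\<lambda>y. beta1 y) has_real_derivative A2) (at y)" for y
    by (auto intro!: derivative_eq_intros)
  consider "X < x" | "x = X" | "x < X"
    by linarith
  then show ?thesis
  proof cases
    case 1
    have "(gamma1 n c has_real_derivative alpha2 n c x) (at x)"
      by (rule has_field_derivative_transform_within_open[OF alpha1_has_derivative, where S = "{X<..}"])
        (use 1 x0_pos in \<open>auto simp: gamma1_def\<close>)
    then show ?thesis
      using 1 by (simp add: gamma2_def has_field_derivative_at_within)
  next
    case 2
    have "((\<lambda>y. beta1 y) has_real_derivative A2) (at X within {0..X})"
      using beta1_deriv[of X] by (simp add: has_field_derivative_at_within)
    moreover have "(alpha1 n c has_real_derivative A2) (at X within {X..})"
      using alpha1_has_derivative[OF x0_pos] by (simp add: has_field_derivative_at_within)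
    ultimately have "(gamma1 n c has_real_derivative A2) (at X within {0..})"
      by (rule has_field_derivative_within_glue[rotated]) (use x0_pos in \<open>auto simp: gamma1_def\<close>)
    then show ?thesis
      using 2 by (simp add: gamma2_def)
  next
    case 3
    have "(gamma1 n c has_real_derivative A2) (at x)"
      by (rule has_field_derivative_transform_within_open[OF beta1_deriv, where S = "{..<X}"])
        (use 3 in \<open>auto simp: gamma1_def\<close>)
    then show ?thesis
      using 3 by (simp add: gamma2_def has_field_derivative_at_within)
  qed
qed

lemma continuous_on_gamma2: "continuous_on {0..} (gamma2 n c)"
proof -
  have "isCont (alpha2 n c) x" if "x > 0" for x
    using DERIV_isCont[OF alpha_root_has_derivative[OF that]] alpha_root_pos[OF that]
    unfolding alpha2_def[abs_def] by (intro continuous_intros) auto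
  then have "continuous_on {x \<in> {0..}. X \<le> x} (alpha2 n c)"
    using x0_pos by (intro continuous_at_imp_continuous_on) auto
  moreover have "gamma2 n c = (\<lambda>x. if x \<le> X then A2 else alpha2 n c x)"
    by (auto simp: gamma2_def)
  ultimately show ?thesis
    by (simp only:) (rule continuous_on_cases_le[OF continuous_on_const _ continuous_on_id]; simp)
qed

lemma gamma_i:
  assumes "0 \<le> x"
  shows "2 * x * gamma2 n c x + gamma1 n c x \<le> 3 / (real n + 2)"
    and "2 * x * gamma2 n c x + gamma1 n c x = 3 / (real n + 2) \<longleftrightarrow> x = X"
  using alpha_i beta_i by (auto simp: gamma1_def gamma2_def) (fastforce simp: not_le)+

lemma
  assumes "X \<le> x"
  shows gamma_right: "gamma n c x = alpha n c x"
    and gamma1_right: "gamma1 n c x = alpha1 n c x"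
  using assms by (simp_all add: gamma_eq gamma1_def)

lemma
  assumes "x < X"
  shows gamma_left: "gamma n c x = beta n c x"
    and gamma1_left: "gamma1 n c x = beta1 x"
  using assms by (simp_all add: gamma_eq gamma1_def)

lemma gamma_ode_eq_iff:
  assumes "0 \<le> x"
  shows "(gamma n c x + real n * c) * x * gamma1 n c x
      = 2 * c * x + (gamma n c x)\<^sup>2 - real n * c * gamma n c x \<longleftrightarrow> X \<le> x"
proof (cases "X \<le> x")
  case True
  then show ?thesis
    unfolding gamma_right[OF True] gamma1_right[OF True]
    using alpha_ode[of x] x0_pos by simp
next
  case False
  then have "x < X"
    by simp
  then show ?thesis
    unfolding gamma_left[OF \<open>x < X\<close>] gamma1_left[OF \<open>x < X\<close>]
    using beta_ii[OF assms] by simp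
qed

lemma gamma_ode_ge:
  assumes "0 \<le> x"
  shows "(gamma n c x + real n * c) * x * gamma1 n c x
      \<ge> 2 * c * x + (gamma n c x)\<^sup>2 - real n * c * gamma n c x"
proof (cases "X \<le> x")
  case True
  then show ?thesis
    using gamma_ode_eq_iff[OF assms] by simp
next
  case False
  then have "x < X"
    by simp
  then show ?thesis
    unfolding gamma_left[OF \<open>x < X\<close>] gamma1_left[OF \<open>x < X\<close>]
    using beta_ii[OF assms] by simp
qed

lemma gamma_gt_tangent:
  assumes "0 \<le> x"
  shows "gamma n c x > x * gamma1 n c x"
proof (cases "X \<le> x")
  case True
  then show ?thesis
    unfolding gamma_right[OF True] gamma1_right[OF True]
    using alpha_gt_tangent[of x] x0_pos by simp
next
  case False
  then have "x < X"
    by simp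
  then show ?thesis
    unfolding gamma_left[OF \<open>x < X\<close>] gamma1_left[OF \<open>x < X\<close>]
    using beta_gt_tangent[OF assms] by simp
qed

lemma gamma_lower:
  assumes "0 \<le> x"
  shows "x / (real n - 1) + 2 * c < gamma n c x"
  using alpha_bounds(1)[of x] beta_lower[of x] x0_pos gamma_right[of x] gamma_left[of x]
  by (cases "X \<le> x") auto

lemma gamma_upper:
  assumes "0 \<le> x"
  shows "gamma n c x < x / (real n - 1) + real n * c"
  using alpha_bounds(2)[of x] beta_upper[OF assms] x0_pos gamma_right[of x] gamma_left[of x]
  by (cases "X \<le> x") auto

lemma gamma_vi:
  assumes "0 \<le> x"
  shows "(real n - 2) / sqrt (real n * (real n - 1)) * sqrt (x * (gamma n c x - x / real n)) + gamma n c x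
      \<le> 2 / real n * x + real n * c"
proof (cases "X \<le> x")
  case True
  then show ?thesis
    unfolding gamma_right[OF True] using alpha_vi[of x] x0_pos by simp
next
  case False
  then have "x < X"
    by simp
  then show ?thesis
    unfolding gamma_left[OF \<open>x < X\<close>] using beta_vi[OF assms] by simp
qed

end

theorem mainTheorem8:
  fixes n :: nat and c :: real
  assumes "n \<ge> 3" and "c > 0"
  shows "\<exists>g1 g2 :: real \<Rightarrow> real.
     (\<forall>x\<ge>0. (gamma n c has_real_derivative g1 x) (at x within {0..})
            \<and> (g1 has_real_derivative g2 x) (at x within {0..}))
   \<and> continuous_on {0..} g2
   \<and> (\<forall>x\<ge>0.
        (2 * x * g2 x + g1 x \<le> 3 / (real n + 2)
           \<and> (2 * x * g2 x + g1 x = 3 / (real n + 2) \<longleftrightarrow> x = x0 n c))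
      \<and> ((gamma n c x + real n * c) * x * g1 x \<ge> 2 * c * x + (gamma n c x)\<^sup>2 - real n * c * gamma n c x
           \<and> ((gamma n c x + real n * c) * x * g1 x = 2 * c * x + (gamma n c x)\<^sup>2 - real n * c * gamma n c x
                \<longleftrightarrow> x \<ge> x0 n c))
      \<and> gamma n c x > x * g1 x
      \<and> gamma n c x = min (alpha n c x) (beta n c x)
      \<and> x / (real n - 1) + 2 * c < gamma n c x \<and> gamma n c x < x / (real n - 1) + real n * c
      \<and> (real n - 2) / sqrt (real n * (real n - 1)) * sqrt (x * (gamma n c x - x / real n)) + gamma n c x
           \<le> 2 / real n * x + real n * c)"
proof -
  interpret gamma_setting n c
    using assms by unfold_locales
  show ?thesis
    by (rule exI[of _ "gamma1 n c"], rule exI[of _ "gamma2 n c"],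
        intro conjI allI impI continuous_on_gamma2)
      (assumption | rule gamma_has_derivative gamma1_has_derivative gamma_i gamma_ode_ge gamma_ode_eq_iff
        gamma_gt_tangent gamma_eq_min gamma_lower gamma_upper gamma_vi)+
qed

end
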